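(* Let $n\ge2$, $s\in(0,1)$, $r>0$ and $s_1\in(0,2s)$. Then for all $x,y\in\mathbb{B}_r$ with $x\neq y$, $$G_{\mathbb{B}_r}(x,y)\le C_4(n,s)\,(d(x))^{s}\,\frac{(d(y))^{s-s_1}}{|x-y|^{\,n-s_1}},$$ where $C_4(n,s)=\pi^{-n/2}\Gamma(s)^{-1}\max\left\{\dfrac{2^{2s}\Gamma(\frac n2)}{\Gamma(1+s)},\ \Gamma\!\left(\tfrac n2-s\right)\right\}$.
   Context: $\mathbb{B}_r=\{x\in\mathbb{R}^n:|x|<r\}$, $d(x)=r-|x|$. The Green function of the fractional Laplacian $(-\Delta)^s$ on $\mathbb{B}_r$ (for $n\ge2$) is $$G_{\mathbb{B}_r}(x,y)=\kappa(n,s)\,|x-y|^{2s-n}\int_0^{r^*(x,y)}\frac{t^{s-1}}{(t+1)^{n/2}}\,dt,\qquad r^*(x,y)=\frac{(r^2-|x|^2)(r^2-|y|^2)}{r^2|x-y|^2},$$ with $\kappa(n,s)=\dfrac{\Gamma(\frac n2)}{2^{2s}\pi^{n/2}\Gamma(s)^2}$. *)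

theory Defs
  imports "HOL-Analysis.Analysis"
begin

text \<open>Dimension n is CARD('n); points of R^n are vectors of type real^'n.\<close>

definition kappa :: "nat \<Rightarrow> real \<Rightarrow> real" where
  "kappa n s = Gamma (real n / 2) / ((2::real) powr (2 * s) * pi powr (real n / 2) * (Gamma s)^2)"

definition rstar :: "real \<Rightarrow> real^'n \<Rightarrow> real^'n \<Rightarrow> real" where
  "rstar r x y = (r^2 - (norm x)^2) * (r^2 - (norm y)^2) / (r^2 * (norm (x - y))^2)"

text \<open>Green function of the fractional Laplacian on the ball of radius r.\<close>
definition green_ball :: "real \<Rightarrow> real \<Rightarrow> real^'n \<Rightarrow> real^'n \<Rightarrow> real" where
  "green_ball s r x y =
     kappa CARD('n) s * norm (x - y) powr (2 * s - real CARD('n)) *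
     (LBINT t=0..rstar r x y. t powr (s - 1) / (t + 1) powr (real CARD('n) / 2))"

definition C4 :: "nat \<Rightarrow> real \<Rightarrow> real" where
  "C4 n s = pi powr (- real n / 2) / Gamma s *
     max (2 powr (2 * s) * Gamma (real n / 2) / Gamma (1 + s)) (Gamma (real n / 2 - s))"

definition dist_bd :: "real \<Rightarrow> real^'n \<Rightarrow> real" where
  "dist_bd r x = r - norm x"

end

theory Submission
  imports Defs
begin

text \<open>Put \<open>\<rho> = |x - y|\<close>, \<open>p = d(x)/\<rho>\<close> and \<open>q = d(y)/\<rho>\<close>; then \<open>r\<^sup>* \<le> 4pq\<close> and, by the triangle
  inequality, \<open>q - 1 \<le> p\<close>. The integral \<open>I(R) = \<integral>\<^sub>0\<^sup>R t^(s-1) (1+t)^(-n/2) dt\<close> is bounded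
  by \<open>R^s/s\<close> (drop the denominator) and, after the substitution \<open>u = t/(1+t)\<close>, by the Beta value
  \<open>B(s, n/2 - s)\<close>. With the Gamma-function form of \<open>\<kappa>\<close> both bounds become multiples of \<open>C\<^sub>4\<close>, and
  the one that is small depends on whether \<open>q \<le> 2\<close> or \<open>q > 2\<close>.\<close>

definition green_integral :: "real \<Rightarrow> real \<Rightarrow> real \<Rightarrow> real" where
  "green_integral m s R = (LBINT t=0..R. t powr (s - 1) / (t + 1) powr m)"

lemma beta_integrand_reparam:
  fixes s m t :: real
  assumes "0 \<le> t"
  shows "(t/(1+t)) powr (s-1) * (1 - t/(1+t)) powr (m-s-1) * (1/(1+t)^2)
       = t powr (s-1) / (t+1) powr m"
proof (cases "t = 0")
  case False
  with assms have t: "t > 0" by simp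
  have "1 - t/(1+t) = 1/(1+t)" using t by (simp add: field_simps)
  moreover have "1/(1+t)^2 = 1 / (1+t) powr 2" using t by (simp add: powr_numeral)
  moreover have "(1+t) powr (s-1) * (1+t) powr (m-s-1) * (1+t) powr 2 = (1+t) powr m"
    by (simp flip: powr_add)
  ultimately show ?thesis
    using t by (simp add: powr_divide add.commute)
qed simp

lemma green_integral_substitution:
  fixes s m R :: real
  assumes "0 < s" "s < m" "0 \<le> R"
  defines "f \<equiv> \<lambda>t. t powr (s-1) / (t+1) powr m"
    and "F \<equiv> \<lambda>u. u powr (s-1) * (1-u) powr (m-s-1)"
  shows "set_integrable lborel {0..R} f"
    and "green_integral m s R = (LBINT u=0..R/(1+R). F u)"
    and "0 \<le> R/(1+R)" "R/(1+R) \<le> 1"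
proof -
  define g where "g t = t/(1+t)" for t :: real
  define g' where "g' t = 1/(1+t)^2" for t :: real
  show U: "0 \<le> R/(1+R)" "R/(1+R) \<le> 1" using assms(3) by (auto simp: field_simps)
  have "set_integrable lborel {0..1} F"
    unfolding F_def using integrable_Beta[of s "m-s"] assms by simp
  then have "set_integrable lborel {g 0..g R} F"
    by (rule set_integrable_subset) (use U in \<open>auto simp: g_def\<close>)
  moreover have "(g has_real_derivative g' t) (at t)" if "t \<in> {0..R}" for t
    using that unfolding g_def g'_def
    by (auto intro!: derivative_eq_intros simp: field_simps power2_eq_square)
  moreover have "continuous_on {0..R} g'"
    unfolding g'_def by (intro continuous_intros) auto
  ultimately have sub:
      "set_integrable lborel {0..R} (\<lambda>t. F (g t) * g' t)"
      "(LBINT t=0..R. F (g t) * g' t) = (LBINT u=g 0..g R. F u)"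
    using interval_integral_substitution[of g 0 R F g'] assms(3) by (auto simp: g'_def zero_ereal_def)
  have eq: "F (g t) * g' t = f t" if "t \<ge> 0" for t
    using beta_integrand_reparam[OF that, of s m] by (simp add: F_def g_def g'_def f_def)
  show "set_integrable lborel {0..R} f"
    using sub(1) by (rule set_integrable_cong[THEN iffD1, rotated -1]) (auto simp: eq)
  have "green_integral m s R = (LBINT t=0..R. F (g t) * g' t)"
    unfolding green_integral_def f_def[symmetric]
  proof (rule interval_integral_cong)
    fix t assume "t \<in> einterval (min 0 (ereal R)) (max 0 (ereal R))"
    then have "t \<ge> 0" using assms(3) by (auto simp: einterval_iff zero_ereal_def)
    then show "f t = F (g t) * g' t" using eq by simp
  qed
  then show "green_integral m s R = (LBINT u=0..R/(1+R). F u)"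
    using sub(2) by (simp add: g_def zero_ereal_def)
qed

lemma green_integral_le_powr:
  fixes s m R :: real
  assumes "0 < s" "s < m" "0 \<le> R"
  shows "green_integral m s R \<le> R powr s / s"
proof -
  define f where "f = (\<lambda>t::real. t powr (s-1) / (t+1) powr m)"
  have intf: "set_integrable lborel {0..R} f"
    using green_integral_substitution(1)[OF assms] by (simp add: f_def)
  have "green_integral m s R = integral {0..R} f"
    using interval_integral_Icc[OF assms(3), of f] set_borel_integral_eq_integral(2)[OF intf]
    by (simp add: green_integral_def f_def zero_ereal_def)
  also have "\<dots> \<le> integral {0..R} (\<lambda>t. t powr (s-1))"
  proof (rule integral_le)
    show "f integrable_on {0..R}" using set_borel_integral_eq_integral(1)[OF intf] .
    show "(\<lambda>t. t powr (s-1)) integrable_on {0..R}"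
      by (rule integrable_on_powr_from_0) (use assms in auto)
    fix t :: real assume "t \<in> {0..R}"
    then have "1 \<le> (t+1) powr m" using assms by (auto intro: ge_one_powr_ge_zero)
    then show "f t \<le> t powr (s-1)"
      unfolding f_def using \<open>t \<in> {0..R}\<close> divide_left_mono[of 1 "(t+1) powr m" "t powr (s-1)"] by simp
  qed
  also have "\<dots> = R powr s / s"
    using has_integral_powr_from_0[of "s-1" R] assms by (simp add: integral_unique)
  finally show ?thesis .
qed

lemma green_integral_le_Beta:
  fixes s m R :: real
  assumes "0 < s" "s < m" "0 \<le> R"
  shows "green_integral m s R \<le> Beta s (m - s)"
proof -
  define F where "F u = u powr (s-1) * (1-u) powr (m-s-1)" for u :: real
  note sub = green_integral_substitution[OF assms, folded F_def]
  have intF: "set_integrable lborel {0..1} F"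
    unfolding F_def using integrable_Beta[of s "m-s"] assms by simp
  have intFU: "set_integrable lborel {0..R/(1+R)} F"
    by (rule set_integrable_subset[OF intF]) (use sub(3,4) in auto)
  have "green_integral m s R = integral {0..R/(1+R)} F"
    using sub(2) interval_integral_Icc[OF sub(3), of F] set_borel_integral_eq_integral(2)[OF intFU]
    by (simp add: zero_ereal_def)
  also have "\<dots> \<le> integral {0..1} F"
  proof (rule integral_subset_le)
    show "F integrable_on {0..R/(1+R)}" using set_borel_integral_eq_integral(1)[OF intFU] .
    show "F integrable_on {0..1}" using set_borel_integral_eq_integral(1)[OF intF] .
  qed (use sub(4) in \<open>auto simp: F_def\<close>)
  also have "\<dots> = Beta s (m - s)"
    using has_integral_Beta_real[of s "m-s"] assms unfolding F_def by (simp add: integral_unique)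
  finally show ?thesis .
qed

lemma kappa_mult_powr_div:
  fixes n :: nat and s R :: real
  assumes "0 < s" "0 \<le> R"
  shows "kappa n s * (R powr s / s)
       = pi powr (- real n / 2) / Gamma s * (2 powr (2 * s) * Gamma (real n / 2) / Gamma (1 + s))
         * (R / 4) powr s / 4 powr s"
proof -
  have four: "(4::real) powr s = 2 powr (2 * s)"
    by (simp add: powr_powr[symmetric] powr_numeral[symmetric])
  have "Gamma (1 + s) = s * Gamma s"
    using Gamma_plus1[of s] assms(1) nonpos_Ints_nonpos[of s] by (auto simp: add.commute)
  moreover have "Gamma s > 0" using assms(1) by (rule Gamma_real_pos)
  ultimately show ?thesis
    using assms by (simp add: kappa_def powr_minus_divide powr_divide four field_simps power2_eq_square)
qed

lemma kappa_mult_Beta: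
  fixes n :: nat and s :: real
  assumes "0 < s" "s < real n / 2"
  shows "kappa n s * Beta s (real n / 2 - s)
       = pi powr (- real n / 2) / Gamma s * Gamma (real n / 2 - s) / 4 powr s"
proof -
  have four: "(4::real) powr s = 2 powr (2 * s)"
    by (simp add: powr_powr[symmetric] powr_numeral[symmetric])
  have "Gamma s > 0" "Gamma (real n / 2) > 0"
    using assms by (auto intro: Gamma_real_pos)
  then show ?thesis
    by (simp add: kappa_def Beta_def powr_minus_divide four field_simps power2_eq_square)
qed

lemma C4_nonneg:
  assumes "0 < s" "0 < n"
  shows "0 \<le> C4 n s"
proof -
  have "0 < Gamma s" "0 < Gamma (1 + s)" "0 < Gamma (real n / 2)"
    using assms by (auto intro: Gamma_real_pos)
  then show ?thesis
    unfolding C4_def by (intro mult_nonneg_nonneg max.coboundedI1) auto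
qed

lemma kappa_mult_green_integral_le:
  fixes n :: nat and s R :: real
  assumes "0 < s" "s < real n / 2" "0 \<le> R"
  shows "kappa n s * green_integral (real n / 2) s R \<le> C4 n s * min ((R / 4) powr s) 1 / 4 powr s"
proof -
  define P where "P = pi powr (- real n / 2) / Gamma s"
  define A1 where "A1 = 2 powr (2 * s) * Gamma (real n / 2) / Gamma (1 + s)"
  define A2 where "A2 = Gamma (real n / 2 - s)"
  have "0 < Gamma s" "0 < Gamma (1 + s)" "0 < Gamma (real n / 2)" "0 < Gamma (real n / 2 - s)"
    using assms by (auto intro: Gamma_real_pos)
  then have pos: "0 \<le> P" "0 \<le> A1" "0 \<le> A2" "0 < kappa n s"
    by (simp_all add: P_def A1_def A2_def kappa_def)
  have "kappa n s * green_integral (real n / 2) s R \<le> kappa n s * (R powr s / s)"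
    using green_integral_le_powr[OF assms] pos by (intro mult_left_mono) auto
  also have "\<dots> = P * A1 * (R / 4) powr s / 4 powr s"
    unfolding P_def A1_def by (rule kappa_mult_powr_div[OF assms(1,3)])
  also have "\<dots> \<le> C4 n s * (R / 4) powr s / 4 powr s"
    unfolding C4_def P_def[symmetric] A1_def[symmetric] A2_def[symmetric]
    using pos by (intro divide_right_mono mult_right_mono mult_left_mono) auto
  finally have I1: "kappa n s * green_integral (real n / 2) s R \<le> C4 n s * (R / 4) powr s / 4 powr s" .
  have "kappa n s * green_integral (real n / 2) s R \<le> kappa n s * Beta s (real n / 2 - s)"
    using green_integral_le_Beta[OF assms] pos by (intro mult_left_mono) auto
  also have "\<dots> = P * A2 / 4 powr s"
    unfolding P_def A2_def by (rule kappa_mult_Beta[OF assms(1,2)])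
  also have "\<dots> \<le> C4 n s / 4 powr s"
    unfolding C4_def P_def[symmetric] A1_def[symmetric] A2_def[symmetric]
    using pos by (intro divide_right_mono mult_left_mono) auto
  finally have I2: "kappa n s * green_integral (real n / 2) s R \<le> C4 n s / 4 powr s" .
  show ?thesis
    using I1 I2 by (simp add: min_def)
qed

lemma rstar_nonneg:
  assumes "norm x \<le> r" "norm y \<le> r"
  shows "0 \<le> rstar r x y"
  using assms by (simp add: rstar_def power_mono)

lemma rstar_le:
  fixes x y :: "real^'n"
  assumes "norm x < r" "norm y < r"
  shows "rstar r x y \<le> 4 * (dist_bd r x / norm (x - y)) * (dist_bd r y / norm (x - y))"
proof -
  have sq_diff: "0 \<le> r^2 - (norm z)^2 \<and> r^2 - (norm z)^2 \<le> 2 * r * dist_bd r z"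
    if "norm z < r" for z :: "real^'n"
  proof -
    have "r^2 - (norm z)^2 = dist_bd r z * (r + norm z)"
      by (simp add: dist_bd_def power2_eq_square algebra_simps)
    moreover have "0 \<le> dist_bd r z" "0 \<le> r + norm z" "r + norm z \<le> 2 * r"
      using that norm_ge_zero[of z] unfolding dist_bd_def by linarith+
    ultimately show ?thesis
      by (simp add: mult_left_mono mult.commute)
  qed
  have "(r^2 - (norm x)^2) * (r^2 - (norm y)^2) \<le> (2 * r * dist_bd r x) * (2 * r * dist_bd r y)"
    using sq_diff[OF assms(1)] sq_diff[OF assms(2)] by (intro mult_mono) auto
  then have "rstar r x y \<le> (2 * r * dist_bd r x) * (2 * r * dist_bd r y) / (r^2 * (norm (x - y))^2)"
    unfolding rstar_def by (intro divide_right_mono) auto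
  also have "\<dots> = 4 * (dist_bd r x / norm (x - y)) * (dist_bd r y / norm (x - y))"
    using assms(1) norm_ge_zero[of x] by (auto simp: field_simps power2_eq_square)
  finally show ?thesis .
qed

lemma dist_bd_div_diff_le:
  fixes x y :: "real^'n"
  assumes "x \<noteq> y"
  shows "dist_bd r y / norm (x - y) - 1 \<le> dist_bd r x / norm (x - y)"
proof -
  have "dist_bd r y - norm (x - y) \<le> dist_bd r x"
    using norm_triangle_ineq2[of x y] by (simp add: dist_bd_def)
  then have "(dist_bd r y - norm (x - y)) / norm (x - y) \<le> dist_bd r x / norm (x - y)"
    by (rule divide_right_mono) simp
  then show ?thesis
    using assms by (simp add: diff_divide_distrib)
qed

text \<open>For \<open>q \<le> 2\<close> the first term is small because \<open>q powr s1 \<le> 4 powr s\<close>; for \<open>q > 2\<close> the constraint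
  \<open>q - 1 \<le> p\<close> gives \<open>p \<ge> q/2\<close>, so the right-hand side is at least \<open>1\<close>.\<close>
lemma min_powr_le:
  fixes s s1 p q :: real
  assumes "0 < s" "0 < s1" "s1 < 2 * s" "0 < p" "0 < q" "q - 1 \<le> p"
  shows "min ((p * q) powr s) 1 \<le> 4 powr s * p powr s * q powr (s - s1)"
proof -
  have four: "(4::real) powr s = 2 powr (2 * s)"
    by (simp add: powr_powr[symmetric] powr_numeral[symmetric])
  have split: "(p * q) powr s = p powr s * q powr (s - s1) * q powr s1"
    using assms by (simp add: powr_mult flip: powr_add)
  show ?thesis
  proof (cases "q \<le> 2")
    case True
    have "q powr s1 \<le> 2 powr s1" using True assms by (intro powr_mono2) auto
    also have "\<dots> \<le> 4 powr s" unfolding four using assms by (intro powr_mono) auto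
    finally have "(p * q) powr s \<le> p powr s * q powr (s - s1) * 4 powr s"
      unfolding split by (intro mult_left_mono) auto
    then show ?thesis by (simp add: mult.commute mult.left_commute)
  next
    case False
    then have "(q / 2) powr s \<le> p powr s" using assms by (intro powr_mono2) auto
    then have "q powr s \<le> 2 powr s * p powr s" using assms by (simp add: powr_divide field_simps)
    also have "\<dots> \<le> 4 powr s * p powr s" using assms by (intro mult_right_mono powr_mono2) auto
    finally have "q powr s * q powr (s - s1) \<le> 4 powr s * p powr s * q powr (s - s1)"
      by (intro mult_right_mono) auto
    moreover have "1 \<le> q powr s * q powr (s - s1)"
      using False assms by (simp flip: powr_add) (intro ge_one_powr_ge_zero; simp)
    ultimately show ?thesis by linarith
  qed
qed

lemma kappa_mult_green_integral_le_powr: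
  fixes n :: nat and s s1 p q R :: real
  assumes "0 < s" "s < real n / 2" "0 < s1" "s1 < 2 * s"
    and "0 < p" "0 < q" "q - 1 \<le> p" "0 \<le> R" "R \<le> 4 * p * q"
  shows "kappa n s * green_integral (real n / 2) s R \<le> C4 n s * p powr s * q powr (s - s1)"
proof -
  have C4: "0 \<le> C4 n s" using assms(1,2) by (intro C4_nonneg) auto
  have "(R / 4) powr s \<le> (p * q) powr s"
    using assms by (intro powr_mono2) auto
  then have "min ((R / 4) powr s) 1 / 4 powr s \<le> min ((p * q) powr s) 1 / 4 powr s"
    by (intro divide_right_mono min.mono) auto
  also have "\<dots> \<le> p powr s * q powr (s - s1)"
    using min_powr_le[OF assms(1,3-7)] by (simp add: divide_le_eq mult_ac)
  finally have "C4 n s * min ((R / 4) powr s) 1 / 4 powr s \<le> C4 n s * (p powr s * q powr (s - s1))"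
    using C4 by (simp add: mult_left_mono flip: times_divide_eq_right)
  then show ?thesis
    using kappa_mult_green_integral_le[OF assms(1,2,8)] by (simp add: mult.assoc)
qed

theorem lemma4p3:
  fixes x y :: "real^'n" and s r s1 :: real
  assumes "CARD('n) \<ge> 2"
    and "0 < s" "s < 1" "0 < r" "0 < s1" "s1 < 2 * s"
    and "x \<in> ball 0 r" "y \<in> ball 0 r" "x \<noteq> y"
  shows "green_ball s r x y \<le>
    C4 CARD('n) s * dist_bd r x powr s * dist_bd r y powr (s - s1)
      / norm (x - y) powr (real CARD('n) - s1)"
proof -
  define n where "n = real CARD('n)"
  define \<rho> where "\<rho> = norm (x - y)"
  define p where "p = dist_bd r x / \<rho>"
  define q where "q = dist_bd r y / \<rho>"
  have xr: "norm x < r" and yr: "norm y < r" and \<rho>: "0 < \<rho>"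
    using assms(7-9) by (auto simp: \<rho>_def)
  have pq: "0 < p" "0 < q" "q - 1 \<le> p"
    using xr yr \<rho> dist_bd_div_diff_le[OF assms(9), of r] by (auto simp: p_def q_def \<rho>_def dist_bd_def)
  have R: "0 \<le> rstar r x y" "rstar r x y \<le> 4 * p * q"
    using rstar_nonneg[of x r y] rstar_le[OF xr yr] xr yr by (auto simp: p_def q_def \<rho>_def)
  have "green_ball s r x y = \<rho> powr (2 * s - n) * (kappa CARD('n) s * green_integral (n / 2) s (rstar r x y))"
    by (simp add: green_ball_def green_integral_def \<rho>_def n_def)
  also have "\<dots> \<le> \<rho> powr (2 * s - n) * (C4 CARD('n) s * p powr s * q powr (s - s1))"
    using kappa_mult_green_integral_le_powr[OF assms(2) _ assms(5,6) pq R] assms(1,3)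
    by (intro mult_left_mono) (auto simp: n_def)
  also have "\<dots> = C4 CARD('n) s * dist_bd r x powr s * dist_bd r y powr (s - s1) / \<rho> powr (n - s1)"
  proof -
    have "\<rho> powr (2 * s - n) * \<rho> powr (n - s1) = \<rho> powr s * \<rho> powr (s - s1)"
      by (simp flip: powr_add)
    then show ?thesis
      using \<rho> pq by (simp add: p_def q_def powr_divide field_simps)
  qed
  finally show ?thesis by (simp add: \<rho>_def n_def)
qed

end
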